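(* Let $G=(V,E)$ be an $S$-regular graph with cells $V_1,\dots,V_k$, $n_i=|V_i|$, and let $C\subsetneq V$. Put $c_i=|C\cap V_i|/n_i$. Let $A_{\bar C}$ be the adjacency matrix of the subgraph of $G$ induced by $V\setminus C$. Then the maximum eigenvalue of $A_{\bar C}$ is at most \[\lambda_S\Bigl(1-\min_{1\le i\le k}c_i\Bigr)+\lambda_B\Bigl(\min_{1\le i\le k}c_i\Bigr).\]
   Context: All graphs are simple, undirected and connected. $G$ is $S$-regular ($S=(s_{ij})$ a $k\times k$ nonnegative integer matrix) if $V$ is partitioned into nonempty cells $V_1,\dots,V_k$ such that every vertex of $V_i$ has exactly $s_{ij}$ neighbours in $V_j$. Let $A$ be the adjacency matrix of $G$, $|V|=n>k$. The matrix $S$ is diagonalizable with real eigenvalues $\lambda_{S_1},\dots,\lambda_{S_k}$ (with multiplicity); the subspace $W=\mathrm{span}\{\mathbf{1}_{V_1},\dots,\mathbf{1}_{V_k}\}$ is $A$-invariant and the eigenvalues of $A$ on $W$ are exactly $\lambda_{S_1},\dots,\lambda_{S_k}$ (the $S$-eigenvalues). The remaining $n-k$ eigenvalues of $A$ (those of $A$ restricted to $W^\perp$) are the bulk eigenvalues. $\lambda_S$ is the largest eigenvalue of $S$ and $\lambda_B$ is the largest absolute value of a bulk eigenvalue. *)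

theory Defs
  imports Main "HOL-Library.Disjoint_Sets" Complex_Main
begin

definition simple_connected_graph :: "'a set \<Rightarrow> ('a \<Rightarrow> 'a \<Rightarrow> bool) \<Rightarrow> bool" where
  "simple_connected_graph V E \<longleftrightarrow>
     finite V \<and> V \<noteq> {} \<and>
     (\<forall>u v. E u v \<longrightarrow> u \<in> V \<and> v \<in> V) \<and>
     (\<forall>u v. E u v \<longrightarrow> E v u) \<and>
     (\<forall>u. \<not> E u u) \<and>
     (\<forall>u\<in>V. \<forall>v\<in>V. E\<^sup>*\<^sup>* u v)"

definition S_regular ::
  "'a set \<Rightarrow> ('a \<Rightarrow> 'a \<Rightarrow> bool) \<Rightarrow> nat \<Rightarrow> (nat \<Rightarrow> 'a set) \<Rightarrow> (nat \<Rightarrow> nat \<Rightarrow> nat) \<Rightarrow> bool" where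
  "S_regular V E k P S \<longleftrightarrow>
     (\<forall>i<k. P i \<noteq> {}) \<and>
     (\<forall>i<k. \<forall>j<k. i \<noteq> j \<longrightarrow> P i \<inter> P j = {}) \<and>
     (\<Union>i<k. P i) = V \<and>
     (\<forall>i<k. \<forall>j<k. \<forall>v\<in>P i. card {w \<in> P j. E v w} = S i j)"

definition adj :: "('a \<Rightarrow> 'a \<Rightarrow> bool) \<Rightarrow> 'a \<Rightarrow> 'a \<Rightarrow> real" where
  "adj E u v = (if E u v then 1 else 0)"

definition is_eigvec_on :: "'a set \<Rightarrow> ('a \<Rightarrow> 'a \<Rightarrow> real) \<Rightarrow> real \<Rightarrow> ('a \<Rightarrow> real) \<Rightarrow> bool" where
  "is_eigvec_on U M \<mu> x \<longleftrightarrow>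
     (\<forall>v. v \<notin> U \<longrightarrow> x v = 0) \<and> (\<exists>v\<in>U. x v \<noteq> 0) \<and>
     (\<forall>u\<in>U. (\<Sum>w\<in>U. M u w * x w) = \<mu> * x u)"

definition is_eigenvalue_on :: "'a set \<Rightarrow> ('a \<Rightarrow> 'a \<Rightarrow> real) \<Rightarrow> real \<Rightarrow> bool" where
  "is_eigenvalue_on U M \<mu> \<longleftrightarrow> (\<exists>x. is_eigvec_on U M \<mu> x)"

definition max_eigenvalue :: "'a set \<Rightarrow> ('a \<Rightarrow> 'a \<Rightarrow> real) \<Rightarrow> real" where
  "max_eigenvalue U M = Max {\<mu>. is_eigenvalue_on U M \<mu>}"

definition lambda_S :: "nat \<Rightarrow> (nat \<Rightarrow> nat \<Rightarrow> nat) \<Rightarrow> real" where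
  "lambda_S k S = max_eigenvalue {..<k} (\<lambda>i j. real (S i j))"

text \<open>Bulk eigenvalues: eigenvalues of A restricted to W-perp, where
  W = span of the cell indicator vectors.\<close>
definition is_bulk_eigenvalue ::
  "'a set \<Rightarrow> ('a \<Rightarrow> 'a \<Rightarrow> bool) \<Rightarrow> nat \<Rightarrow> (nat \<Rightarrow> 'a set) \<Rightarrow> real \<Rightarrow> bool" where
  "is_bulk_eigenvalue V E k P \<mu> \<longleftrightarrow>
     (\<exists>x. is_eigvec_on V (adj E) \<mu> x \<and> (\<forall>i<k. (\<Sum>v\<in>P i. x v) = 0))"

definition lambda_B :: "'a set \<Rightarrow> ('a \<Rightarrow> 'a \<Rightarrow> bool) \<Rightarrow> nat \<Rightarrow> (nat \<Rightarrow> 'a set) \<Rightarrow> real" where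
  "lambda_B V E k P = Max {\<bar>\<mu>\<bar> | \<mu>. is_bulk_eigenvalue V E k P \<mu>}"

end

theory Submission
  imports Defs "HOL-Analysis.Analysis"
begin

text \<open>Let x be an eigenvector for the largest eigenvalue of the adjacency matrix A on V - C,
  extended by zero, and split x = y + z into its cell averages y and a part z with zero sum on
  every cell. Both parts span A-invariant, mutually orthogonal subspaces, so
  x'Ax = y'Ay + z'Az <= lambda_S |y|^2 + lambda_B |z|^2: the largest Rayleigh quotient of A is
  an eigenvalue of S (a maximiser may be taken nonnegative, and its cell average is then a
  nonzero cell-constant eigenvector), and the largest one on zero-sum vectors is a bulk
  eigenvalue. As x vanishes on C, Cauchy-Schwarz on each cell gives
  |y|^2 <= (1 - min c_i) |x|^2, and lambda_B <= lambda_S concludes.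
  Maxima of Rayleigh quotients are attained by compactness of unit spheres.\<close>

section \<open>Quadratic forms of finitely supported vectors\<close>

definition supp_on :: "'a set \<Rightarrow> ('a \<Rightarrow> real) set" where
  "supp_on U = {x. \<forall>u. u \<notin> U \<longrightarrow> x u = 0}"

definition inner_on :: "'a set \<Rightarrow> ('a \<Rightarrow> real) \<Rightarrow> ('a \<Rightarrow> real) \<Rightarrow> real" where
  "inner_on U x y = (\<Sum>u\<in>U. x u * y u)"

definition mat_vec :: "('a \<Rightarrow> 'a \<Rightarrow> real) \<Rightarrow> 'a set \<Rightarrow> ('a \<Rightarrow> real) \<Rightarrow> 'a \<Rightarrow> real" where
  "mat_vec M U x u = (\<Sum>w\<in>U. M u w * x w)"

definition bilin_form :: "('a \<Rightarrow> 'a \<Rightarrow> real) \<Rightarrow> 'a set \<Rightarrow> ('a \<Rightarrow> real) \<Rightarrow> ('a \<Rightarrow> real) \<Rightarrow> real" where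
  "bilin_form M U x y = (\<Sum>u\<in>U. \<Sum>w\<in>U. M u w * x u * y w)"

lemma inner_on_commute: "inner_on U x y = inner_on U y x"
  unfolding inner_on_def by (simp add: mult.commute)

lemma inner_on_nonneg: "0 \<le> inner_on U x x"
  unfolding inner_on_def by (simp add: sum_nonneg)

lemma square_le_inner_on:
  assumes "finite U" "u \<in> U"
  shows "(x u)\<^sup>2 \<le> inner_on U x x"
  unfolding inner_on_def power2_eq_square using assms by (intro member_le_sum) auto

lemma inner_on_pos:
  assumes "finite U" "u \<in> U" "x u \<noteq> 0"
  shows "0 < inner_on U x x"
  using square_le_inner_on[OF assms(1,2), of x] assms(3)
  by (meson order_less_le_trans zero_less_power2)

lemma inner_on_eq_0D:
  assumes "finite U" "inner_on U x x = 0" "u \<in> U"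
  shows "x u = 0"
  using inner_on_pos[OF assms(1,3)] assms(2) by force

lemma inner_on_scale: "inner_on U (\<lambda>u. c * x u) (\<lambda>u. c * x u) = c\<^sup>2 * inner_on U x x"
  unfolding inner_on_def by (simp add: algebra_simps sum_distrib_left power2_eq_square)

lemma inner_on_add_scale:
  "inner_on U (\<lambda>u. x u + t * y u) (\<lambda>u. x u + t * y u) =
     inner_on U x x + 2 * t * inner_on U x y + t\<^sup>2 * inner_on U y y"
  unfolding inner_on_def
  by (simp add: algebra_simps sum.distrib sum_distrib_left power2_eq_square)

lemma inner_on_abs: "inner_on U (\<lambda>u. \<bar>x u\<bar>) (\<lambda>u. \<bar>x u\<bar>) = inner_on U x x"
  unfolding inner_on_def by (simp add: abs_mult_self_eq)

lemma inner_on_supp_on: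
  assumes "finite V" "U \<subseteq> V" "x \<in> supp_on U"
  shows "inner_on V x x = inner_on U x x"
  unfolding inner_on_def using assms by (intro sum.mono_neutral_right) (auto simp: supp_on_def)

lemma bilin_form_commute:
  assumes "\<And>u w. M u w = M w u"
  shows "bilin_form M U x y = bilin_form M U y x"
  unfolding bilin_form_def by (subst sum.swap) (simp add: assms mult_ac)

lemma bilin_form_eq_inner_on_mat_vec: "bilin_form M U x y = inner_on U x (mat_vec M U y)"
  unfolding bilin_form_def inner_on_def mat_vec_def by (simp add: sum_distrib_left mult_ac)

lemma bilin_form_scale: "bilin_form M U (\<lambda>u. c * x u) (\<lambda>u. c * x u) = c\<^sup>2 * bilin_form M U x x"
  unfolding bilin_form_def by (simp add: algebra_simps sum_distrib_left power2_eq_square)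

lemma bilin_form_add_scale:
  assumes "\<And>u w. M u w = M w u"
  shows "bilin_form M U (\<lambda>u. x u + t * y u) (\<lambda>u. x u + t * y u) =
     bilin_form M U x x + 2 * t * bilin_form M U x y + t\<^sup>2 * bilin_form M U y y"
proof -
  have "bilin_form M U (\<lambda>u. x u + t * y u) (\<lambda>u. x u + t * y u) =
     bilin_form M U x x + t * bilin_form M U x y + t * bilin_form M U y x + t\<^sup>2 * bilin_form M U y y"
    unfolding bilin_form_def
    by (simp add: algebra_simps sum.distrib sum_distrib_left power2_eq_square)
  then show ?thesis using bilin_form_commute[of M U y x] assms by simp
qed

lemma abs_bilin_form_le:
  assumes "\<And>u w. 0 \<le> M u w"
  shows "\<bar>bilin_form M U x x\<bar> \<le> bilin_form M U (\<lambda>u. \<bar>x u\<bar>) (\<lambda>u. \<bar>x u\<bar>)"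
proof -
  have "\<bar>bilin_form M U x x\<bar> \<le> (\<Sum>u\<in>U. \<Sum>w\<in>U. \<bar>M u w * x u * x w\<bar>)"
    unfolding bilin_form_def by (rule order_trans[OF sum_abs sum_mono[OF sum_abs]])
  also have "\<dots> = bilin_form M U (\<lambda>u. \<bar>x u\<bar>) (\<lambda>u. \<bar>x u\<bar>)"
    unfolding bilin_form_def using assms by (simp add: abs_mult)
  finally show ?thesis .
qed

lemma bilin_form_supp_on:
  assumes "finite V" "U \<subseteq> V" "x \<in> supp_on U"
  shows "bilin_form M V x x = bilin_form M U x x"
  using assms unfolding bilin_form_def supp_on_def
  by (subst sum.mono_neutral_right[of V U], simp_all)
    (intro sum.cong refl sum.mono_neutral_right; auto)

lemma continuous_on_inner_on: "continuous_on UNIV (\<lambda>x. inner_on U x x)"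
  unfolding inner_on_def by (intro continuous_intros continuous_on_product_coordinates)

lemma continuous_on_bilin_form: "continuous_on UNIV (\<lambda>x. bilin_form M U x x)"
  unfolding bilin_form_def by (intro continuous_intros continuous_on_product_coordinates)

lemma inner_on_mat_vec_eigvec:
  assumes "is_eigvec_on U M \<mu> x"
  shows "inner_on U y (mat_vec M U x) = \<mu> * inner_on U y x"
  using assms unfolding is_eigvec_on_def inner_on_def mat_vec_def
  by (simp add: sum_distrib_left mult_ac)

lemma bilin_form_eigvec:
  assumes "is_eigvec_on U M \<mu> x"
  shows "bilin_form M U x x = \<mu> * inner_on U x x"
  using inner_on_mat_vec_eigvec[OF assms] by (simp add: bilin_form_eq_inner_on_mat_vec)

lemma inner_on_eigvec_pos:
  assumes "is_eigvec_on U M \<mu> x" "finite U"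
  shows "0 < inner_on U x x"
  using assms inner_on_pos unfolding is_eigvec_on_def by metis

lemma orthogonal_eigvecs:
  assumes "\<And>u w. M u w = M w u" "is_eigvec_on U M \<mu> x" "is_eigvec_on U M \<nu> y" "\<mu> \<noteq> \<nu>"
  shows "inner_on U x y = 0"
proof -
  have "\<mu> * inner_on U y x = bilin_form M U y x"
    by (simp add: bilin_form_eq_inner_on_mat_vec inner_on_mat_vec_eigvec[OF assms(2)])
  also have "\<dots> = bilin_form M U x y"
    using bilin_form_commute assms(1) by metis
  also have "\<dots> = \<nu> * inner_on U x y"
    by (simp add: bilin_form_eq_inner_on_mat_vec inner_on_mat_vec_eigvec[OF assms(3)])
  finally show ?thesis using assms(4) by (simp add: inner_on_commute[of U y x])
qed

text \<open>Bessel's inequality for the coordinate vector at v.\<close>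
lemma orthonormal_sum_squares_le_1:
  assumes "finite U" "finite \<Lambda>" "v \<in> U"
    and orthonormal: "\<And>\<mu> \<nu>. \<mu> \<in> \<Lambda> \<Longrightarrow> \<nu> \<in> \<Lambda> \<Longrightarrow> inner_on U (e \<mu>) (e \<nu>) = (if \<mu> = \<nu> then 1 else 0)"
  shows "(\<Sum>\<mu>\<in>\<Lambda>. (e \<mu> v)\<^sup>2) \<le> 1"
proof -
  define s where "s = (\<Sum>\<mu>\<in>\<Lambda>. (e \<mu> v)\<^sup>2)"
  define g where "g u = (\<Sum>\<mu>\<in>\<Lambda>. e \<mu> v * e \<mu> u)" for u
  have "inner_on U g g = (\<Sum>u\<in>U. \<Sum>\<mu>\<in>\<Lambda>. \<Sum>\<nu>\<in>\<Lambda>. e \<mu> v * e \<nu> v * (e \<mu> u * e \<nu> u))"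
    unfolding inner_on_def g_def sum_product by (simp add: mult_ac)
  also have "\<dots> = (\<Sum>\<mu>\<in>\<Lambda>. \<Sum>\<nu>\<in>\<Lambda>. \<Sum>u\<in>U. e \<mu> v * e \<nu> v * (e \<mu> u * e \<nu> u))"
    by (subst sum.swap) (simp add: sum.swap[of _ U])
  also have "\<dots> = (\<Sum>\<mu>\<in>\<Lambda>. \<Sum>\<nu>\<in>\<Lambda>. e \<mu> v * e \<nu> v * inner_on U (e \<mu>) (e \<nu>))"
    unfolding inner_on_def by (simp add: sum_distrib_left)
  also have "\<dots> = s"
    unfolding s_def power2_eq_square using assms(2)
    by (intro sum.cong refl) (simp add: orthonormal if_distrib cong: if_cong)
  finally have "inner_on U g g = s" .
  moreover have "g v = s" unfolding g_def s_def by (simp add: power2_eq_square)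
  ultimately have "s\<^sup>2 \<le> s" using square_le_inner_on[OF assms(1,3), of g] by simp
  then have "s \<le> 1"
    by (metis linorder_not_le mult_le_cancel_right2 order_trans power2_eq_square zero_le_one)
  then show ?thesis unfolding s_def .
qed

lemma card_orthogonal_family_le:
  assumes "finite U"
    and nonzero: "\<And>\<mu>. \<mu> \<in> \<Lambda> \<Longrightarrow> 0 < inner_on U (x \<mu>) (x \<mu>)"
    and orthogonal: "\<And>\<mu> \<nu>. \<mu> \<in> \<Lambda> \<Longrightarrow> \<nu> \<in> \<Lambda> \<Longrightarrow> \<mu> \<noteq> \<nu> \<Longrightarrow> inner_on U (x \<mu>) (x \<nu>) = 0"
  shows "card \<Lambda> \<le> card U"
proof (cases "finite \<Lambda>")
  case True
  define e where "e \<mu> u = x \<mu> u / sqrt (inner_on U (x \<mu>) (x \<mu>))" for \<mu> u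
  have orthonormal: "inner_on U (e \<mu>) (e \<nu>) = (if \<mu> = \<nu> then 1 else 0)"
    if "\<mu> \<in> \<Lambda>" "\<nu> \<in> \<Lambda>" for \<mu> \<nu>
  proof -
    have "inner_on U (e \<mu>) (e \<nu>) = inner_on U (x \<mu>) (x \<nu>) /
        (sqrt (inner_on U (x \<mu>) (x \<mu>)) * sqrt (inner_on U (x \<nu>) (x \<nu>)))"
      unfolding e_def inner_on_def by (simp add: sum_divide_distrib)
    then show ?thesis
      using that nonzero[of \<mu>] orthogonal[of \<mu> \<nu>] by (cases "\<mu> = \<nu>") simp_all
  qed
  have "real (card \<Lambda>) = (\<Sum>\<mu>\<in>\<Lambda>. inner_on U (e \<mu>) (e \<mu>))" using orthonormal by simp
  also have "\<dots> = (\<Sum>v\<in>U. \<Sum>\<mu>\<in>\<Lambda>. (e \<mu> v)\<^sup>2)"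
    unfolding inner_on_def power2_eq_square by (rule sum.swap)
  also have "\<dots> \<le> (\<Sum>v\<in>U. 1)"
    using orthonormal_sum_squares_le_1[OF assms(1) True _ orthonormal] by (intro sum_mono) auto
  finally show ?thesis by simp
qed simp

lemma finite_eigenvalues:
  assumes "finite U" "\<And>u w. M u w = M w u"
  shows "finite {\<mu>. is_eigenvalue_on U M \<mu>}"
proof (rule ccontr)
  assume "infinite {\<mu>. is_eigenvalue_on U M \<mu>}"
  then obtain \<Lambda> where \<Lambda>: "\<Lambda> \<subseteq> {\<mu>. is_eigenvalue_on U M \<mu>}" "card \<Lambda> = Suc (card U)"
    using infinite_arbitrarily_large by blast
  then have "\<forall>\<mu>\<in>\<Lambda>. \<exists>x. is_eigvec_on U M \<mu> x"
    unfolding is_eigenvalue_on_def by blast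
  then obtain x where x: "\<And>\<mu>. \<mu> \<in> \<Lambda> \<Longrightarrow> is_eigvec_on U M \<mu> (x \<mu>)"
    by (metis bchoice)
  have "card \<Lambda> \<le> card U"
  proof (rule card_orthogonal_family_le[OF assms(1)])
    show "0 < inner_on U (x \<mu>) (x \<mu>)" if "\<mu> \<in> \<Lambda>" for \<mu>
      using inner_on_eigvec_pos[OF x[OF that] assms(1)] .
    show "inner_on U (x \<mu>) (x \<nu>) = 0" if "\<mu> \<in> \<Lambda>" "\<nu> \<in> \<Lambda>" "\<mu> \<noteq> \<nu>" for \<mu> \<nu>
      using orthogonal_eigvecs[OF assms(2) x[OF that(1)] x[OF that(2)] that(3)] .
  qed
  then show False using \<Lambda>(2) by simp
qed

lemma linear_coeff_eq_0_if_nonneg: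
  fixes b c :: real
  assumes "\<And>t. 0 \<le> 2 * t * b + t\<^sup>2 * c"
  shows "b = 0"
proof (rule ccontr)
  assume "b \<noteq> 0"
  have "0 \<le> c" using assms[of 1] assms[of "-1"] by simp
  define t where "t = - b / (c + 1)"
  have t: "(c + 1) * t = - b" unfolding t_def using \<open>0 \<le> c\<close> by simp
  have "(c + 1)\<^sup>2 * (2 * t * b + t\<^sup>2 * c) = 2 * b * ((c + 1) * t) * (c + 1) + c * ((c + 1) * t)\<^sup>2"
    by (simp add: algebra_simps power2_eq_square)
  also have "\<dots> = - (b\<^sup>2 * (c + 2))"
    unfolding t by (simp add: algebra_simps power2_eq_square)
  finally have "(c + 1)\<^sup>2 * (2 * t * b + t\<^sup>2 * c) = - (b\<^sup>2 * (c + 2))" .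
  moreover have "0 < b\<^sup>2 * (c + 2)" using \<open>0 \<le> c\<close> \<open>b \<noteq> 0\<close> by simp
  ultimately show False using assms[of t] by (metis mult_nonneg_nonneg neg_less_0_iff_less not_less zero_le_power2)
qed

section \<open>Rayleigh quotients on invariant subspaces\<close>

text \<open>Closedness is redundant, as L is finite-dimensional, but assuming it saves proving it.\<close>
definition invariant_subspace :: "'a set \<Rightarrow> ('a \<Rightarrow> 'a \<Rightarrow> real) \<Rightarrow> ('a \<Rightarrow> real) set \<Rightarrow> bool" where
  "invariant_subspace U M L \<longleftrightarrow>
     closed L \<and> L \<subseteq> supp_on U \<and>
     (\<forall>x\<in>L. \<forall>y\<in>L. \<forall>a b. (\<lambda>u. a * x u + b * y u) \<in> L) \<and>
     (\<forall>x\<in>L. (\<lambda>u. if u \<in> U then mat_vec M U x u else 0) \<in> L)"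

lemma closed_supp_on: "closed (supp_on U)"
  unfolding supp_on_def
  by (intro closed_Collect_all closed_Collect_imp open_Collect_const closed_Collect_eq
      continuous_on_product_coordinates continuous_on_const)

lemma invariant_subspace_supp_on: "invariant_subspace U M (supp_on U)"
  unfolding invariant_subspace_def using closed_supp_on by (auto simp: supp_on_def)

text \<open>Perturbing z along w = m z - M z cannot raise the Rayleigh quotient above m,
  which forces w to vanish.\<close>
lemma maximizer_is_eigvec:
  assumes "finite U" and sym: "\<And>u w. M u w = M w u" and L: "invariant_subspace U M L"
    and bound: "\<And>x. x \<in> L \<Longrightarrow> bilin_form M U x x \<le> m * inner_on U x x"
    and "z \<in> L" and max: "bilin_form M U z z = m * inner_on U z z" and "u \<in> U"
  shows "mat_vec M U z u = m * z u"
proof -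
  define w where "w u = (if u \<in> U then m * z u - mat_vec M U z u else 0)" for u
  have "z \<in> supp_on U" using L \<open>z \<in> L\<close> unfolding invariant_subspace_def by blast
  then have "w = (\<lambda>u. m * z u + (-1) * (if u \<in> U then mat_vec M U z u else 0))"
    unfolding w_def supp_on_def by auto
  then have "w \<in> L" using L \<open>z \<in> L\<close> unfolding invariant_subspace_def by metis
  have "0 \<le> 2 * t * (m * inner_on U z w - bilin_form M U z w) + t\<^sup>2 * (m * inner_on U w w - bilin_form M U w w)"
    for t
  proof -
    have "(\<lambda>u. 1 * z u + t * w u) \<in> L" using L \<open>z \<in> L\<close> \<open>w \<in> L\<close> unfolding invariant_subspace_def by blast
    from bound[OF this[simplified]] show ?thesis
      using max by (simp add: bilin_form_add_scale[OF sym] inner_on_add_scale algebra_simps)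
  qed
  then have "m * inner_on U z w = bilin_form M U z w"
    using linear_coeff_eq_0_if_nonneg by fastforce
  then have "inner_on U w (\<lambda>u. m * z u - mat_vec M U z u) = 0"
    using bilin_form_commute[of M U z w] sym
    by (simp add: bilin_form_eq_inner_on_mat_vec inner_on_commute[of U z] inner_on_def
        sum_subtractf sum_distrib_left algebra_simps)
  moreover have "inner_on U w (\<lambda>u. m * z u - mat_vec M U z u) = inner_on U w w"
    unfolding inner_on_def w_def by (intro sum.cong) auto
  ultimately have "w u = 0" using inner_on_eq_0D[OF \<open>finite U\<close> _ \<open>u \<in> U\<close>] by simp
  then show ?thesis using \<open>u \<in> U\<close> unfolding w_def by simp
qed

lemma compact_unit_box: "compact (PiE UNIV (\<lambda>u. if u \<in> U then {-1..1} else {0::real}))"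
proof -
  have "compactin (product_topology (\<lambda>_. euclidean) UNIV)
      (PiE UNIV (\<lambda>u. if u \<in> U then {-1..1} else {0::real}))"
    by (subst compactin_PiE) auto
  then show ?thesis by (simp add: euclidean_product_topology)
qed

lemma compact_unit_sphere_on:
  assumes "finite U" "closed L" "L \<subseteq> supp_on U"
  shows "compact (L \<inter> {x. inner_on U x x = 1})"
proof -
  have "L \<inter> {x. inner_on U x x = 1} \<subseteq> PiE UNIV (\<lambda>u. if u \<in> U then {-1..1} else {0})"
  proof
    fix x assume x: "x \<in> L \<inter> {x. inner_on U x x = 1}"
    then have "\<bar>x u\<bar> \<le> 1" if "u \<in> U" for u
      using square_le_inner_on[OF \<open>finite U\<close> that, of x] by (simp add: abs_square_le_1)
    moreover have "x u = 0" if "u \<notin> U" for u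
      using x assms(3) that unfolding supp_on_def by blast
    ultimately show "x \<in> PiE UNIV (\<lambda>u. if u \<in> U then {-1..1} else {0})"
      by (auto simp: abs_le_iff)
  qed
  moreover have "closed (L \<inter> {x. inner_on U x x = 1})"
    by (intro closed_Int assms(2) closed_Collect_eq continuous_on_inner_on continuous_on_const)
  ultimately show ?thesis
    using compact_Int_closed[OF compact_unit_box[of U], of "L \<inter> {x. inner_on U x x = 1}"]
    by (simp add: inf.absorb2)
qed

lemma rayleigh_max_attained:
  assumes "finite U" and L: "invariant_subspace U M L" and "x0 \<in> L" "u0 \<in> U" "x0 u0 \<noteq> 0"
  obtains m z where "\<And>x. x \<in> L \<Longrightarrow> bilin_form M U x x \<le> m * inner_on U x x"
    and "z \<in> L" "inner_on U z z = 1" "bilin_form M U z z = m"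
proof -
  define K where "K = L \<inter> {x. inner_on U x x = 1}"
  define c where "c x = 1 / sqrt (inner_on U x x)" for x
  have normalized: "(\<lambda>u. c x * x u) \<in> K" and scale_normalized: "(c x)\<^sup>2 * inner_on U x x = 1"
    if "x \<in> L" "0 < inner_on U x x" for x
  proof -
    show c: "(c x)\<^sup>2 * inner_on U x x = 1"
      using that(2) unfolding c_def by (simp add: power_divide)
    have "(\<lambda>u. c x * x u + 0 * x u) \<in> L" using L that(1) unfolding invariant_subspace_def by blast
    then show "(\<lambda>u. c x * x u) \<in> K"
      unfolding K_def using c by (simp add: inner_on_scale)
  qed
  have "compact K"
    using L unfolding K_def invariant_subspace_def by (intro compact_unit_sphere_on[OF \<open>finite U\<close>]) auto
  moreover have "K \<noteq> {}"
    using normalized[OF \<open>x0 \<in> L\<close> inner_on_pos[OF \<open>finite U\<close> \<open>u0 \<in> U\<close>]] assms(5) by blast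
  ultimately obtain z where "z \<in> K" and zmax: "\<And>y. y \<in> K \<Longrightarrow> bilin_form M U y y \<le> bilin_form M U z z"
    using continuous_attains_sup[of K "\<lambda>x. bilin_form M U x x"]
      continuous_on_subset[OF continuous_on_bilin_form subset_UNIV] by blast
  have "bilin_form M U x x \<le> bilin_form M U z z * inner_on U x x" if "x \<in> L" for x
  proof (cases "inner_on U x x = 0")
    case True
    then have "\<forall>u\<in>U. x u = 0" using inner_on_eq_0D[OF \<open>finite U\<close>] by blast
    then show ?thesis using True by (simp add: bilin_form_def)
  next
    case False
    then have pos: "0 < inner_on U x x" using inner_on_nonneg[of U x] by linarith
    have "(c x)\<^sup>2 * bilin_form M U x x \<le> bilin_form M U z z"
      using zmax[OF normalized[OF \<open>x \<in> L\<close> pos]] by (simp only: bilin_form_scale)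
    from mult_right_mono[OF this inner_on_nonneg[of U x]]
    have "(c x)\<^sup>2 * inner_on U x x * bilin_form M U x x \<le> bilin_form M U z z * inner_on U x x"
      by (simp add: mult_ac)
    then show ?thesis using scale_normalized[OF \<open>x \<in> L\<close> pos] by simp
  qed
  then show ?thesis using that \<open>z \<in> K\<close> unfolding K_def by blast
qed

lemma rayleigh_eigenvalue:
  assumes "finite U" and sym: "\<And>u w. M u w = M w u" and L: "invariant_subspace U M L"
    and "x0 \<in> L" "u0 \<in> U" "x0 u0 \<noteq> 0"
  obtains m z where "\<And>x. x \<in> L \<Longrightarrow> bilin_form M U x x \<le> m * inner_on U x x"
    and "\<And>x u. x \<in> L \<Longrightarrow> bilin_form M U x x = m * inner_on U x x \<Longrightarrow> u \<in> U \<Longrightarrow>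
           mat_vec M U x u = m * x u"
    and "z \<in> L" "is_eigvec_on U M m z"
proof -
  obtain m z where bound: "\<And>x. x \<in> L \<Longrightarrow> bilin_form M U x x \<le> m * inner_on U x x"
    and z: "z \<in> L" "inner_on U z z = 1" "bilin_form M U z z = m"
    using rayleigh_max_attained[OF assms(1,3-6)] by blast
  have max: "mat_vec M U x u = m * x u"
    if "x \<in> L" "bilin_form M U x x = m * inner_on U x x" "u \<in> U" for x u
    using maximizer_is_eigvec[OF \<open>finite U\<close> sym L bound that] .
  have "is_eigvec_on U M m z"
    unfolding is_eigvec_on_def
  proof (intro conjI allI impI ballI)
    show "z v = 0" if "v \<notin> U" for v using L z(1) that unfolding invariant_subspace_def supp_on_def by blast
    show "\<exists>v\<in>U. z v \<noteq> 0"
    proof (rule ccontr)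
      assume "\<not> (\<exists>v\<in>U. z v \<noteq> 0)"
      then have "inner_on U z z = 0" unfolding inner_on_def by simp
      with z(2) show False by simp
    qed
    show "(\<Sum>w\<in>U. M u w * z w) = m * z u" if "u \<in> U" for u
      using max[OF z(1) _ that] z(2,3) by (simp add: mat_vec_def)
  qed
  with that bound max z(1) show ?thesis by blast
qed

lemma rayleigh_eigenvalue_supp_on:
  assumes "finite U" "U \<noteq> {}" "\<And>u w. M u w = M w u"
  obtains m z where "\<And>x. x \<in> supp_on U \<Longrightarrow> bilin_form M U x x \<le> m * inner_on U x x"
    and "\<And>x u. x \<in> supp_on U \<Longrightarrow> bilin_form M U x x = m * inner_on U x x \<Longrightarrow> u \<in> U \<Longrightarrow>
           mat_vec M U x u = m * x u"
    and "is_eigvec_on U M m z"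
proof -
  obtain u0 where "u0 \<in> U" using assms(2) by blast
  define x0 :: "'a \<Rightarrow> real" where "x0 u = (if u = u0 then 1 else 0)" for u
  have "x0 \<in> supp_on U" "x0 u0 \<noteq> 0" using \<open>u0 \<in> U\<close> unfolding x0_def supp_on_def by auto
  then show ?thesis
    using that by (rule rayleigh_eigenvalue[OF assms(1,3) invariant_subspace_supp_on _ \<open>u0 \<in> U\<close>])
qed

lemma max_eigenvalue_is_eigenvalue:
  assumes "finite U" "U \<noteq> {}" "\<And>u w. M u w = M w u"
  shows "is_eigenvalue_on U M (max_eigenvalue U M)"
proof -
  obtain m z where "is_eigvec_on U M m z"
    by (rule rayleigh_eigenvalue_supp_on[OF assms])
  then have "{\<mu>. is_eigenvalue_on U M \<mu>} \<noteq> {}" unfolding is_eigenvalue_on_def by blast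
  then have "max_eigenvalue U M \<in> {\<mu>. is_eigenvalue_on U M \<mu>}"
    unfolding max_eigenvalue_def by (rule Max_in[OF finite_eigenvalues[OF assms(1,3)]])
  then show ?thesis by simp
qed

lemma abs_eigenvalue_le_form_bound:
  assumes "finite U" "\<And>u w. 0 \<le> M u w"
    and bound: "\<And>x. x \<in> supp_on U \<Longrightarrow> bilin_form M U x x \<le> m * inner_on U x x"
    and x: "is_eigvec_on U M \<mu> x"
  shows "\<bar>\<mu>\<bar> \<le> m"
proof -
  have "(\<lambda>u. \<bar>x u\<bar>) \<in> supp_on U" using x unfolding is_eigvec_on_def supp_on_def by simp
  have "\<bar>\<mu>\<bar> * inner_on U x x = \<bar>bilin_form M U x x\<bar>"
    using bilin_form_eigvec[OF x] inner_on_nonneg[of U x] by (simp add: abs_mult)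
  also have "\<dots> \<le> bilin_form M U (\<lambda>u. \<bar>x u\<bar>) (\<lambda>u. \<bar>x u\<bar>)"
    using abs_bilin_form_le assms(2) by blast
  also have "\<dots> \<le> m * inner_on U x x"
    using bound[OF \<open>(\<lambda>u. \<bar>x u\<bar>) \<in> supp_on U\<close>] by (simp add: inner_on_abs)
  finally show ?thesis using inner_on_eigvec_pos[OF x assms(1)] by simp
qed

lemma maximizer_abs:
  assumes "\<And>u w. 0 \<le> M u w"
    and bound: "\<And>x. x \<in> supp_on U \<Longrightarrow> bilin_form M U x x \<le> m * inner_on U x x"
    and "x \<in> supp_on U" "bilin_form M U x x = m * inner_on U x x"
  shows "bilin_form M U (\<lambda>u. \<bar>x u\<bar>) (\<lambda>u. \<bar>x u\<bar>) = m * inner_on U (\<lambda>u. \<bar>x u\<bar>) (\<lambda>u. \<bar>x u\<bar>)"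
proof -
  have "(\<lambda>u. \<bar>x u\<bar>) \<in> supp_on U" using assms(3) unfolding supp_on_def by simp
  then show ?thesis
    using bound[of "\<lambda>u. \<bar>x u\<bar>"] abs_bilin_form_le[of M U x] assms(1,4)
    by (simp add: inner_on_abs)
qed

text \<open>Cauchy--Schwarz on the part of X outside C.\<close>
lemma square_sum_le_outside:
  fixes x :: "'a \<Rightarrow> real"
  assumes "finite X" "X \<noteq> {}" "\<And>u. u \<in> C \<Longrightarrow> x u = 0"
  shows "(\<Sum>u\<in>X. x u)\<^sup>2 / card X \<le> (1 - card (C \<inter> X) / card X) * (\<Sum>u\<in>X. (x u)\<^sup>2)"
proof -
  have n: "0 < real (card X)" using assms(1,2) by (simp add: card_gt_0_iff)
  have "(\<Sum>u\<in>X. x u) = (\<Sum>u\<in>X - C. x u)"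
    using assms by (intro sum.mono_neutral_right) auto
  moreover have "(\<Sum>u\<in>X. (x u)\<^sup>2) = (\<Sum>u\<in>X - C. (x u)\<^sup>2)"
    using assms by (intro sum.mono_neutral_right) auto
  ultimately have "(\<Sum>u\<in>X. x u)\<^sup>2 \<le> card (X - C) * (\<Sum>u\<in>X. (x u)\<^sup>2)"
    using Cauchy_Schwarz_ineq_sum[of "\<lambda>_. 1" x "X - C"] by simp
  moreover have "real (card (X - C)) = card X * (1 - card (C \<inter> X) / card X)"
  proof -
    have "card (X - C) = card X - card (C \<inter> X)" "card (C \<inter> X) \<le> card X"
      using assms(1) by (simp_all add: card_Diff_subset_Int card_mono Int_commute)
    then show ?thesis using n by (simp add: of_nat_diff field_simps)
  qed
  ultimately have "(\<Sum>u\<in>X. x u)\<^sup>2 \<le> (1 - card (C \<inter> X) / card X) * (\<Sum>u\<in>X. (x u)\<^sup>2) * card X"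
    by (simp add: mult_ac)
  then show ?thesis using n by (simp add: pos_divide_le_eq)
qed

section \<open>Equitable partitions\<close>

text \<open>Q plays the role of the quotient matrix S.\<close>
locale equitable_partition =
  fixes V :: "'a set" and M :: "'a \<Rightarrow> 'a \<Rightarrow> real" and k :: nat
    and P :: "nat \<Rightarrow> 'a set" and Q :: "nat \<Rightarrow> nat \<Rightarrow> real"
  assumes finite_V: "finite V"
    and symmetric: "M u w = M w u"
    and nonneg: "0 \<le> M u w"
    and cell_nonempty: "i < k \<Longrightarrow> P i \<noteq> {}"
    and cells_disjoint: "i < k \<Longrightarrow> j < k \<Longrightarrow> i \<noteq> j \<Longrightarrow> P i \<inter> P j = {}"
    and cells_cover: "(\<Union>i<k. P i) = V"
    and row_sums: "i < k \<Longrightarrow> j < k \<Longrightarrow> u \<in> P i \<Longrightarrow> (\<Sum>w\<in>P j. M u w) = Q i j"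
begin

lemma cell_subset: "i < k \<Longrightarrow> P i \<subseteq> V"
  using cells_cover by blast

lemma finite_cell: "i < k \<Longrightarrow> finite (P i)"
  using cell_subset finite_V finite_subset by blast

lemma card_cell_pos: "i < k \<Longrightarrow> 0 < card (P i)"
  using finite_cell cell_nonempty by (simp add: card_gt_0_iff)

definition cell :: "'a \<Rightarrow> nat" where
  "cell u = (THE i. i < k \<and> u \<in> P i)"

lemma cell_eqI: "i < k \<Longrightarrow> u \<in> P i \<Longrightarrow> cell u = i"
  unfolding cell_def using cells_disjoint by (intro the_equality) blast+

lemma cell_less: "u \<in> V \<Longrightarrow> cell u < k"
  and mem_cell: "u \<in> V \<Longrightarrow> u \<in> P (cell u)"
  using cells_cover cell_eqI by auto

lemma sum_over_cells: "(\<Sum>u\<in>V. f u) = (\<Sum>i<k. \<Sum>u\<in>P i. f u)"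
  unfolding cells_cover[symmetric] using finite_cell cells_disjoint
  by (intro sum.UNION_disjoint) auto

lemma mat_vec_cell_const:
  assumes "u \<in> V"
  shows "mat_vec M V (\<lambda>w. g (cell w)) u = (\<Sum>j<k. Q (cell u) j * g j)"
proof -
  have "mat_vec M V (\<lambda>w. g (cell w)) u = (\<Sum>j<k. (\<Sum>w\<in>P j. M u w) * g j)"
    unfolding mat_vec_def sum_over_cells by (intro sum.cong refl) (simp add: sum_distrib_right cell_eqI)
  also have "\<dots> = (\<Sum>j<k. Q (cell u) j * g j)"
    using row_sums cell_less[OF assms] mem_cell[OF assms] by simp
  finally show ?thesis .
qed

text \<open>The orthogonal complement W-perp of the cell indicators, inside the vectors on V.\<close>
definition bulk_space :: "('a \<Rightarrow> real) set" where
  "bulk_space = supp_on V \<inter> {x. \<forall>i<k. (\<Sum>u\<in>P i. x u) = 0}"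

lemma bulk_space_orthogonal_cell_const:
  assumes "z \<in> bulk_space"
  shows "(\<Sum>u\<in>V. z u * g (cell u)) = 0"
proof -
  have "(\<Sum>u\<in>V. z u * g (cell u)) = (\<Sum>i<k. (\<Sum>u\<in>P i. z u) * g i)"
    unfolding sum_over_cells by (intro sum.cong refl) (simp add: sum_distrib_right cell_eqI)
  also have "\<dots> = 0" using assms unfolding bulk_space_def by simp
  finally show ?thesis .
qed

lemma bilin_form_cell_const_bulk_space:
  assumes "z \<in> bulk_space"
  shows "bilin_form M V (\<lambda>u. g (cell u)) z = 0"
proof -
  have "bilin_form M V (\<lambda>u. g (cell u)) z = inner_on V z (mat_vec M V (\<lambda>u. g (cell u)))"
    using bilin_form_commute[of M V "\<lambda>u. g (cell u)" z] symmetric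
    by (simp add: bilin_form_eq_inner_on_mat_vec)
  also have "\<dots> = (\<Sum>u\<in>V. z u * (\<lambda>i. \<Sum>j<k. Q i j * g j) (cell u))"
    unfolding inner_on_def by (intro sum.cong refl) (simp add: mat_vec_cell_const)
  also have "\<dots> = 0" by (rule bulk_space_orthogonal_cell_const[OF assms])
  finally show ?thesis .
qed

lemma invariant_subspace_bulk_space: "invariant_subspace V M bulk_space"
  unfolding invariant_subspace_def
proof (intro conjI ballI allI)
  show "closed bulk_space"
    unfolding bulk_space_def
    by (intro closed_Int closed_supp_on closed_Collect_all closed_Collect_imp open_Collect_const
        closed_Collect_eq continuous_on_product_coordinates continuous_on_const continuous_intros)
  show "bulk_space \<subseteq> supp_on V" unfolding bulk_space_def by blast
  show "(\<lambda>u. a * x u + b * y u) \<in> bulk_space" if "x \<in> bulk_space" "y \<in> bulk_space" for x y a b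
    using that unfolding bulk_space_def supp_on_def
    by (simp add: sum.distrib sum_distrib_left[symmetric])
  fix z assume z: "z \<in> bulk_space"
  have "(\<Sum>u\<in>P i. if u \<in> V then mat_vec M V z u else 0) = 0" if "i < k" for i
  proof -
    have "{u \<in> V. cell u = i} = P i"
      using cell_subset[OF that] cell_eqI[OF that] mem_cell by auto
    have "(\<Sum>u\<in>P i. if u \<in> V then mat_vec M V z u else 0) = (\<Sum>u\<in>P i. mat_vec M V z u)"
      using cell_subset[OF that] by (intro sum.cong) auto
    also have "\<dots> = (\<Sum>u\<in>V. if cell u = i then mat_vec M V z u else 0)"
      using finite_V \<open>{u \<in> V. cell u = i} = P i\<close> by (simp add: sum.inter_filter[symmetric])
    also have "\<dots> = (\<Sum>u\<in>V. (if cell u = i then 1 else 0) * mat_vec M V z u)"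
      by (intro sum.cong) auto
    also have "\<dots> = bilin_form M V (\<lambda>u. if cell u = i then 1 else 0) z"
      by (simp add: bilin_form_eq_inner_on_mat_vec inner_on_def)
    also have "\<dots> = 0" by (rule bilin_form_cell_const_bulk_space[OF z])
    finally show ?thesis .
  qed
  then show "(\<lambda>u. if u \<in> V then mat_vec M V z u else 0) \<in> bulk_space"
    unfolding bulk_space_def supp_on_def by simp
qed

definition cell_mean :: "('a \<Rightarrow> real) \<Rightarrow> nat \<Rightarrow> real" where
  "cell_mean x i = (\<Sum>w\<in>P i. x w) / card (P i)"

definition cell_avg :: "('a \<Rightarrow> real) \<Rightarrow> 'a \<Rightarrow> real" where
  "cell_avg x u = (if u \<in> V then cell_mean x (cell u) else 0)"

lemma cell_avg_supp_on: "cell_avg x \<in> supp_on V"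
  unfolding cell_avg_def supp_on_def by simp

lemma residual_in_bulk_space:
  assumes "x \<in> supp_on V"
  shows "(\<lambda>u. x u - cell_avg x u) \<in> bulk_space"
proof -
  have "(\<Sum>u\<in>P i. x u - cell_avg x u) = 0" if "i < k" for i
  proof -
    have "(\<Sum>u\<in>P i. cell_avg x u) = (\<Sum>u\<in>P i. cell_mean x i)"
      unfolding cell_avg_def using cell_subset[OF that] cell_eqI[OF that] by (intro sum.cong) auto
    also have "\<dots> = (\<Sum>u\<in>P i. x u)"
      using card_cell_pos[OF that] unfolding cell_mean_def by simp
    finally show ?thesis by (simp add: sum_subtractf)
  qed
  then show ?thesis using assms unfolding bulk_space_def supp_on_def cell_avg_def by auto
qed

lemma orthogonal_cell_avg_bulk_space:
  assumes "z \<in> bulk_space"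
  shows "inner_on V (cell_avg x) z = 0" and "bilin_form M V (cell_avg x) z = 0"
proof -
  show "inner_on V (cell_avg x) z = 0"
    using bulk_space_orthogonal_cell_const[OF assms, of "cell_mean x"]
    unfolding inner_on_def cell_avg_def by (simp add: mult.commute)
  have "bilin_form M V (cell_avg x) z = bilin_form M V (\<lambda>u. cell_mean x (cell u)) z"
    unfolding bilin_form_def cell_avg_def by (intro sum.cong refl) simp
  then show "bilin_form M V (cell_avg x) z = 0"
    using bilin_form_cell_const_bulk_space[OF assms] by simp
qed

lemma cell_avg_pythagoras:
  assumes "x \<in> supp_on V"
  defines "z \<equiv> \<lambda>u. x u - cell_avg x u"
  shows "bilin_form M V x x = bilin_form M V (cell_avg x) (cell_avg x) + bilin_form M V z z"
    and "inner_on V x x = inner_on V (cell_avg x) (cell_avg x) + inner_on V z z"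
proof -
  have x: "(\<lambda>u. cell_avg x u + 1 * z u) = x" unfolding z_def by simp
  have "z \<in> bulk_space" unfolding z_def by (rule residual_in_bulk_space[OF assms(1)])
  note orthogonal = orthogonal_cell_avg_bulk_space[OF this, of x]
  show "bilin_form M V x x = bilin_form M V (cell_avg x) (cell_avg x) + bilin_form M V z z"
    using bilin_form_add_scale[of M V "cell_avg x" 1 z] symmetric orthogonal unfolding x by simp
  show "inner_on V x x = inner_on V (cell_avg x) (cell_avg x) + inner_on V z z"
    using inner_on_add_scale[of V "cell_avg x" 1 z] orthogonal unfolding x by simp
qed

lemma eigvec_lift_cell_const:
  assumes "is_eigvec_on {..<k} Q \<mu> a"
  shows "is_eigvec_on V M \<mu> (\<lambda>u. if u \<in> V then a (cell u) else 0)"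
  unfolding is_eigvec_on_def
proof (intro conjI allI impI ballI)
  obtain i where "i < k" "a i \<noteq> 0" using assms unfolding is_eigvec_on_def by auto
  then obtain v where "v \<in> P i" using cell_nonempty by blast
  then show "\<exists>v\<in>V. (if v \<in> V then a (cell v) else 0) \<noteq> 0"
    using \<open>i < k\<close> \<open>a i \<noteq> 0\<close> cell_subset cell_eqI by (intro bexI[of _ v]) auto
  fix u assume "u \<in> V"
  have "(\<Sum>w\<in>V. M u w * (if w \<in> V then a (cell w) else 0)) = mat_vec M V (\<lambda>w. a (cell w)) u"
    unfolding mat_vec_def by (intro sum.cong) auto
  also have "\<dots> = \<mu> * a (cell u)"
    using assms cell_less[OF \<open>u \<in> V\<close>] unfolding mat_vec_cell_const[OF \<open>u \<in> V\<close>] is_eigvec_on_def by simp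
  finally show "(\<Sum>w\<in>V. M u w * (if w \<in> V then a (cell w) else 0)) = \<mu> * (if u \<in> V then a (cell u) else 0)"
    using \<open>u \<in> V\<close> by simp
qed simp

lemma finite_Q_eigenvalues: "finite {\<mu>. is_eigenvalue_on {..<k} Q \<mu>}"
proof (rule finite_subset[OF _ finite_eigenvalues[OF finite_V symmetric]])
  show "{\<mu>. is_eigenvalue_on {..<k} Q \<mu>} \<subseteq> {\<mu>. is_eigenvalue_on V M \<mu>}"
    using eigvec_lift_cell_const unfolding is_eigenvalue_on_def by blast
qed

lemma le_max_eigenvalue_Q: "is_eigenvalue_on {..<k} Q \<mu> \<Longrightarrow> \<mu> \<le> max_eigenvalue {..<k} Q"
  unfolding max_eigenvalue_def using finite_Q_eigenvalues by simp

lemma cell_const_eigvec_Q_eigenvalue: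
  assumes eig: "\<And>u. u \<in> V \<Longrightarrow> mat_vec M V (\<lambda>w. g (cell w)) u = \<mu> * g (cell u)"
    and "i < k" "g i \<noteq> 0"
  shows "is_eigenvalue_on {..<k} Q \<mu>"
  unfolding is_eigenvalue_on_def is_eigvec_on_def
proof (intro exI[of _ "\<lambda>j. if j < k then g j else 0"] conjI ballI allI impI)
  show "\<exists>j\<in>{..<k}. (if j < k then g j else 0) \<noteq> 0" using assms(2,3) by auto
  fix j assume "j \<in> {..<k}"
  then obtain v where v: "v \<in> P j" using cell_nonempty by blast
  then have "v \<in> V" "cell v = j" using \<open>j \<in> {..<k}\<close> cell_subset cell_eqI by auto
  then show "(\<Sum>l\<in>{..<k}. Q j l * (if l < k then g l else 0)) = \<mu> * (if j < k then g j else 0)"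
    using eig[OF \<open>v \<in> V\<close>] \<open>j \<in> {..<k}\<close> mat_vec_cell_const[OF \<open>v \<in> V\<close>] by simp
qed simp

text \<open>Perron-type argument: with x also |x| is a maximizer, and so is its cell average,
  which is a nonzero cell-constant eigenvector.\<close>
lemma rayleigh_max_is_Q_eigenvalue:
  assumes bound: "\<And>x. x \<in> supp_on V \<Longrightarrow> bilin_form M V x x \<le> m * inner_on V x x"
    and max: "\<And>x u. x \<in> supp_on V \<Longrightarrow> bilin_form M V x x = m * inner_on V x x \<Longrightarrow> u \<in> V \<Longrightarrow>
                mat_vec M V x u = m * x u"
    and x: "is_eigvec_on V M m x"
  shows "is_eigenvalue_on {..<k} Q m"
proof -
  define ax where "ax u = \<bar>x u\<bar>" for u
  have "x \<in> supp_on V" using x unfolding is_eigvec_on_def supp_on_def by simp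
  then have ax: "ax \<in> supp_on V" unfolding ax_def supp_on_def by simp
  have "bilin_form M V ax ax = m * inner_on V ax ax"
    unfolding ax_def using maximizer_abs[OF nonneg bound \<open>x \<in> supp_on V\<close> bilin_form_eigvec[OF x]] .
  moreover have "(\<lambda>u. ax u - cell_avg ax u) \<in> supp_on V"
    using residual_in_bulk_space[OF ax] unfolding bulk_space_def by blast
  ultimately have "bilin_form M V (cell_avg ax) (cell_avg ax) = m * inner_on V (cell_avg ax) (cell_avg ax)"
    using bound[OF cell_avg_supp_on, of ax] bound[of "\<lambda>u. ax u - cell_avg ax u"]
    unfolding cell_avg_pythagoras[OF ax] distrib_left by linarith
  from max[OF cell_avg_supp_on this]
  have eig: "mat_vec M V (\<lambda>w. cell_mean ax (cell w)) u = m * cell_mean ax (cell u)" if "u \<in> V" for u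
    using that unfolding cell_avg_def mat_vec_def by simp
  obtain u where "u \<in> V" "x u \<noteq> 0" using x unfolding is_eigvec_on_def by blast
  have "0 < cell_mean ax (cell u)"
  proof -
    have "ax u \<le> (\<Sum>w\<in>P (cell u). ax w)"
      using finite_cell cell_less mem_cell \<open>u \<in> V\<close> by (intro member_le_sum) (auto simp: ax_def)
    then show ?thesis
      using \<open>x u \<noteq> 0\<close> card_cell_pos[OF cell_less[OF \<open>u \<in> V\<close>]] unfolding cell_mean_def ax_def by simp
  qed
  then have "cell_mean ax (cell u) \<noteq> 0" by simp
  then show ?thesis
    using cell_const_eigvec_Q_eigenvalue[where g = "cell_mean ax", OF eig cell_less[OF \<open>u \<in> V\<close>]] by blast
qed

lemma form_le_max_eigenvalue_Q:
  assumes "V \<noteq> {}" "x \<in> supp_on V"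
  shows "bilin_form M V x x \<le> max_eigenvalue {..<k} Q * inner_on V x x"
proof -
  obtain m z where bound: "\<And>x. x \<in> supp_on V \<Longrightarrow> bilin_form M V x x \<le> m * inner_on V x x"
    and max: "\<And>x u. x \<in> supp_on V \<Longrightarrow> bilin_form M V x x = m * inner_on V x x \<Longrightarrow> u \<in> V \<Longrightarrow>
                mat_vec M V x u = m * x u"
    and "is_eigvec_on V M m z"
    using rayleigh_eigenvalue_supp_on[of V M, OF finite_V assms(1) symmetric] by blast
  then have "m \<le> max_eigenvalue {..<k} Q"
    using le_max_eigenvalue_Q rayleigh_max_is_Q_eigenvalue by blast
  then show ?thesis
    using bound[OF assms(2)] inner_on_nonneg[of V x] by (meson mult_right_mono order_trans)
qed

lemma abs_eigenvalue_le_max_eigenvalue_Q: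
  assumes "is_eigvec_on V M \<mu> x"
  shows "\<bar>\<mu>\<bar> \<le> max_eigenvalue {..<k} Q"
proof -
  have "V \<noteq> {}" using assms unfolding is_eigvec_on_def by blast
  show ?thesis
    using abs_eigenvalue_le_form_bound[OF finite_V nonneg form_le_max_eigenvalue_Q[OF \<open>V \<noteq> {}\<close>] assms] .
qed

definition bulk_eigenvalue :: "real \<Rightarrow> bool" where
  "bulk_eigenvalue \<mu> \<longleftrightarrow> (\<exists>x. is_eigvec_on V M \<mu> x \<and> (\<forall>i<k. (\<Sum>v\<in>P i. x v) = 0))"

definition lambda_bulk :: real where
  "lambda_bulk = Max {\<bar>\<mu>\<bar> | \<mu>. bulk_eigenvalue \<mu>}"

lemma finite_abs_bulk_eigenvalues: "finite {\<bar>\<mu>\<bar> | \<mu>. bulk_eigenvalue \<mu>}"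
proof (rule finite_subset[OF _ finite_imageI[OF finite_eigenvalues[OF finite_V symmetric]]])
  show "{\<bar>\<mu>\<bar> | \<mu>. bulk_eigenvalue \<mu>} \<subseteq> abs ` {\<mu>. is_eigenvalue_on V M \<mu>}"
    unfolding bulk_eigenvalue_def is_eigenvalue_on_def by blast
qed

text \<open>Two vertices of a common cell exist because there are more vertices than cells.\<close>
lemma bulk_space_nonzero:
  assumes "k < card V"
  obtains x v where "x \<in> bulk_space" "v \<in> V" "x v \<noteq> 0"
proof -
  have "\<not> (\<forall>i<k. card (P i) \<le> 1)"
  proof
    assume "\<forall>i<k. card (P i) \<le> 1"
    then have "card V \<le> k"
      using card_UN_le[of "{..<k}" P] cells_cover sum_mono[of "{..<k}" "\<lambda>i. card (P i)" "\<lambda>_. 1"]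
      by simp
    with assms show False by simp
  qed
  then obtain i where "i < k" "\<not> card (P i) \<le> Suc 0" by auto
  then obtain a b where "a \<in> P i" "b \<in> P i" "a \<noteq> b"
    using card_le_Suc0_iff_eq[OF finite_cell[OF \<open>i < k\<close>]] by blast
  define x :: "'a \<Rightarrow> real" where "x u = (if u = a then 1 else 0) - (if u = b then 1 else 0)" for u
  have "(\<Sum>u\<in>P j. x u) = 0" if "j < k" for j
  proof -
    have "a \<in> P j \<longleftrightarrow> b \<in> P j"
      using cell_eqI[OF that] cell_eqI[OF \<open>i < k\<close>] \<open>a \<in> P i\<close> \<open>b \<in> P i\<close> by auto
    then show ?thesis unfolding x_def using finite_cell[OF that] by (simp add: sum_subtractf)
  qed
  moreover have "x \<in> supp_on V"
    using cell_subset[OF \<open>i < k\<close>] \<open>a \<in> P i\<close> \<open>b \<in> P i\<close> unfolding x_def supp_on_def by auto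
  ultimately show ?thesis
    using that[of x a] cell_subset[OF \<open>i < k\<close>] \<open>a \<in> P i\<close> \<open>a \<noteq> b\<close> unfolding bulk_space_def x_def by auto
qed

lemma form_le_lambda_bulk:
  assumes "k < card V" "z \<in> bulk_space"
  shows "bilin_form M V z z \<le> lambda_bulk * inner_on V z z"
proof -
  obtain x0 v where "x0 \<in> bulk_space" "v \<in> V" "x0 v \<noteq> 0" using bulk_space_nonzero[OF assms(1)] .
  then obtain m x where bound: "\<And>x. x \<in> bulk_space \<Longrightarrow> bilin_form M V x x \<le> m * inner_on V x x"
    and "x \<in> bulk_space" "is_eigvec_on V M m x"
    by (rule rayleigh_eigenvalue[of V M, OF finite_V symmetric invariant_subspace_bulk_space]) blast
  then have "bulk_eigenvalue m" unfolding bulk_eigenvalue_def bulk_space_def by blast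
  then have "\<bar>m\<bar> \<le> lambda_bulk"
    unfolding lambda_bulk_def by (intro Max_ge[OF finite_abs_bulk_eigenvalues]) blast
  then have "m \<le> lambda_bulk" by linarith
  then show ?thesis
    using bound[OF assms(2)] inner_on_nonneg[of V z] by (meson mult_right_mono order_trans)
qed

lemma lambda_bulk_le_max_eigenvalue_Q:
  assumes "k < card V"
  shows "lambda_bulk \<le> max_eigenvalue {..<k} Q"
proof -
  obtain x0 v where "x0 \<in> bulk_space" "v \<in> V" "x0 v \<noteq> 0" using bulk_space_nonzero[OF assms(1)] .
  then obtain m x where "x \<in> bulk_space" "is_eigvec_on V M m x"
    by (rule rayleigh_eigenvalue[of V M, OF finite_V symmetric invariant_subspace_bulk_space]) blast
  then have "{\<bar>\<mu>\<bar> | \<mu>. bulk_eigenvalue \<mu>} \<noteq> {}" unfolding bulk_eigenvalue_def bulk_space_def by blast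
  then have "lambda_bulk \<in> {\<bar>\<mu>\<bar> | \<mu>. bulk_eigenvalue \<mu>}"
    unfolding lambda_bulk_def by (rule Max_in[OF finite_abs_bulk_eigenvalues])
  then obtain \<mu> x where "lambda_bulk = \<bar>\<mu>\<bar>" "is_eigvec_on V M \<mu> x"
    unfolding bulk_eigenvalue_def by blast
  then show ?thesis using abs_eigenvalue_le_max_eigenvalue_Q by simp
qed

lemma inner_on_cell_avg_le:
  assumes "x \<in> supp_on (V - C)" and c: "\<And>i. i < k \<Longrightarrow> c \<le> card (C \<inter> P i) / card (P i)"
  shows "inner_on V (cell_avg x) (cell_avg x) \<le> (1 - c) * inner_on V x x"
proof -
  have cell: "(\<Sum>u\<in>P i. cell_avg x u * cell_avg x u) \<le> (1 - c) * (\<Sum>u\<in>P i. (x u)\<^sup>2)"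
    if "i \<in> {..<k}" for i
  proof -
    from that have "i < k" by simp
    have "(\<Sum>u\<in>P i. cell_avg x u * cell_avg x u) = (\<Sum>u\<in>P i. cell_mean x i * cell_mean x i)"
      using cell_subset[OF \<open>i < k\<close>] cell_eqI[OF \<open>i < k\<close>] by (intro sum.cong) (auto simp: cell_avg_def)
    also have "\<dots> = (\<Sum>u\<in>P i. x u)\<^sup>2 / card (P i)"
      using card_cell_pos[OF \<open>i < k\<close>] by (simp add: cell_mean_def power2_eq_square)
    also have "\<dots> \<le> (1 - card (C \<inter> P i) / card (P i)) * (\<Sum>u\<in>P i. (x u)\<^sup>2)"
      using assms(1) finite_cell[OF \<open>i < k\<close>] cell_nonempty[OF \<open>i < k\<close>] unfolding supp_on_def
      by (intro square_sum_le_outside) auto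
    also have "\<dots> \<le> (1 - c) * (\<Sum>u\<in>P i. (x u)\<^sup>2)"
      using c[OF \<open>i < k\<close>] by (intro mult_right_mono) (auto simp: sum_nonneg)
    finally show ?thesis .
  qed
  have "inner_on V (cell_avg x) (cell_avg x) = (\<Sum>i<k. \<Sum>u\<in>P i. cell_avg x u * cell_avg x u)"
    unfolding inner_on_def by (rule sum_over_cells)
  also have "\<dots> \<le> (\<Sum>i<k. (1 - c) * (\<Sum>u\<in>P i. (x u)\<^sup>2))" by (rule sum_mono[OF cell])
  also have "\<dots> = (1 - c) * inner_on V x x"
    unfolding inner_on_def sum_over_cells[of "\<lambda>u. x u * x u"] sum_distrib_left power2_eq_square ..
  finally show ?thesis .
qed

theorem max_eigenvalue_delete_le:
  assumes "k < card V" "C \<subset> V" "\<And>i. i < k \<Longrightarrow> c \<le> card (C \<inter> P i) / card (P i)"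
  shows "max_eigenvalue (V - C) M \<le> max_eigenvalue {..<k} Q * (1 - c) + lambda_bulk * c"
proof -
  define \<mu> where "\<mu> = max_eigenvalue (V - C) M"
  define lQ where "lQ = max_eigenvalue {..<k} Q"
  have "finite (V - C)" "V - C \<noteq> {}" using finite_V assms(2) by auto
  then obtain x where x: "is_eigvec_on (V - C) M \<mu> x"
    using max_eigenvalue_is_eigenvalue symmetric unfolding \<mu>_def is_eigenvalue_on_def by blast
  have "x \<in> supp_on (V - C)" using x unfolding is_eigvec_on_def supp_on_def by simp
  then have "x \<in> supp_on V" unfolding supp_on_def by auto
  define z where "z u = x u - cell_avg x u" for u
  note split = cell_avg_pythagoras[OF \<open>x \<in> supp_on V\<close>, folded z_def]
  have "z \<in> bulk_space" unfolding z_def by (rule residual_in_bulk_space[OF \<open>x \<in> supp_on V\<close>])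
  have restrict: "inner_on V x x = inner_on (V - C) x x" "bilin_form M V x x = bilin_form M (V - C) x x"
    using inner_on_supp_on[OF finite_V _ \<open>x \<in> supp_on (V - C)\<close>]
      bilin_form_supp_on[OF finite_V _ \<open>x \<in> supp_on (V - C)\<close>] by auto
  have "\<mu> * inner_on V x x = bilin_form M V x x"
    unfolding restrict by (rule bilin_form_eigvec[OF x, symmetric])
  also have "\<dots> \<le> lQ * inner_on V (cell_avg x) (cell_avg x) + lambda_bulk * inner_on V z z"
    using form_le_max_eigenvalue_Q[OF _ cell_avg_supp_on, of x] form_le_lambda_bulk[OF assms(1) \<open>z \<in> bulk_space\<close>]
      assms(2) unfolding split(1) lQ_def by force
  also have "\<dots> = lambda_bulk * inner_on V x x + (lQ - lambda_bulk) * inner_on V (cell_avg x) (cell_avg x)"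
    unfolding split(2) by (simp add: algebra_simps)
  also have "\<dots> \<le> lambda_bulk * inner_on V x x + (lQ - lambda_bulk) * ((1 - c) * inner_on V x x)"
    using lambda_bulk_le_max_eigenvalue_Q[OF assms(1)] inner_on_cell_avg_le[OF \<open>x \<in> supp_on (V - C)\<close> assms(3)]
    unfolding lQ_def by (intro add_left_mono mult_left_mono) auto
  also have "\<dots> = (lQ * (1 - c) + lambda_bulk * c) * inner_on V x x"
    by (simp add: algebra_simps)
  finally show ?thesis
    using inner_on_eigvec_pos[OF x \<open>finite (V - C)\<close>] unfolding restrict \<mu>_def lQ_def by simp
qed

end

lemma S_regular_equitable_partition:
  assumes "simple_connected_graph V E" "S_regular V E k P S"
  shows "equitable_partition V (adj E) k P (\<lambda>i j. real (S i j))"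
proof -
  have "finite V" and sym: "\<And>u v. E u v \<Longrightarrow> E v u"
    using assms(1) unfolding simple_connected_graph_def by auto
  have cells: "(\<forall>i<k. P i \<noteq> {})" "\<forall>i<k. \<forall>j<k. i \<noteq> j \<longrightarrow> P i \<inter> P j = {}" "(\<Union>i<k. P i) = V"
    and degrees: "\<forall>i<k. \<forall>j<k. \<forall>v\<in>P i. card {w \<in> P j. E v w} = S i j"
    using assms(2) unfolding S_regular_def by auto
  show ?thesis
  proof
    fix i j u assume "i < k" "j < k" "u \<in> P i"
    have "finite (P j)" using \<open>finite V\<close> cells(3) \<open>j < k\<close> by (meson UN_upper finite_subset lessThan_iff)
    then have "(\<Sum>w\<in>P j. adj E u w) = card {w \<in> P j. E u w}"
      unfolding adj_def by (simp add: sum.inter_filter[symmetric])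
    then show "(\<Sum>w\<in>P j. adj E u w) = real (S i j)"
      using degrees \<open>i < k\<close> \<open>j < k\<close> \<open>u \<in> P i\<close> by simp
  qed (use \<open>finite V\<close> sym cells in \<open>auto simp: adj_def\<close>)
qed

theorem mainTheorem6:
  fixes V :: "'a set" and E :: "'a \<Rightarrow> 'a \<Rightarrow> bool" and k :: nat
    and P :: "nat \<Rightarrow> 'a set" and S :: "nat \<Rightarrow> nat \<Rightarrow> nat" and C :: "'a set"
  assumes graph: "simple_connected_graph V E"
    and reg: "S_regular V E k P S"
    and nk: "card V > k"
    and C: "C \<subset> V"
  defines "cmin \<equiv> Min ((\<lambda>i. real (card (C \<inter> P i)) / real (card (P i))) ` {..<k})"
  shows "max_eigenvalue (V - C) (adj E)
           \<le> lambda_S k S * (1 - cmin) + lambda_B V E k P * cmin"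
proof -
  interpret equitable_partition V "adj E" k P "\<lambda>i j. real (S i j)"
    by (rule S_regular_equitable_partition[OF graph reg])
  have "lambda_B V E k P = lambda_bulk"
    unfolding lambda_B_def lambda_bulk_def is_bulk_eigenvalue_def bulk_eigenvalue_def ..
  moreover have "cmin \<le> card (C \<inter> P i) / card (P i)" if "i < k" for i
    unfolding cmin_def using that by (intro Min_le) auto
  ultimately show ?thesis
    using max_eigenvalue_delete_le[OF nk C] unfolding lambda_S_def by simp
qed

end
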